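(* In the setting of the SigSAS system with $0<\lambda<\min\{1,1/\widetilde M\}$, there exists a linear map $A_{\lambda,l,p}:T^{l+1}(\mathbb R^{p+1})\to T^{l+1}(\mathbb R^{p+1})$ whose matrix in the canonical basis is invertible and has nonnegative entries, such that $U^{\rm SigSAS}_{\lambda,l,p}(\mathbf z)_t=A_{\lambda,l,p}\widehat{\mathbf z}_t$ for all $\mathbf z\in K_M$ and $t\in\mathbb Z_-$.
   Context: $M>0$, $l,p\in\mathbb N$, $\widetilde M=\sum_{j=0}^pM^j$, $K_M=[-M,M]^{\mathbb Z_-}$. $T^{l+1}(\mathbb R^{p+1})=(\mathbb R^{p+1})^{\otimes(l+1)}$ with canonical basis $\mathbf e_{i_1}\otimes\cdots\otimes\mathbf e_{i_{l+1}}$ and Euclidean norm of coefficients. $\pi_l:T^{l+1}(\mathbb R^{p+1})\to T^{l}(\mathbb R^{p+1})$ is the linear map $\pi_l(\sum a_{i_1\dots i_{l+1}}\mathbf e_{i_1}\otimes\cdots\otimes\mathbf e_{i_{l+1}})=\sum a_{1,i_2\dots i_{l+1}}\mathbf e_{i_2}\otimes\cdots\otimes\mathbf e_{i_{l+1}}$. For $z\in\mathbb R$, $\widetilde{\mathbf z}=\sum_{i=1}^{p+1}z^{i-1}\mathbf e_i$; for a sequence, $\widetilde{\mathbf z}_t$ corresponds to $z_t$ and $\widehat{\mathbf z}_t=\widetilde{\mathbf z}_{t-l}\otimes\cdots\otimes\widetilde{\mathbf z}_t$. Fix $I_0\subset\{1,\dots,p+1\}$ with $1\in I_0$, $|I_0|>1$,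 and $\widehat{\mathbf z}^0=\sum_{i\in I_0}z^{i-1}\mathbf e_1^{\otimes l}\otimes\mathbf e_i$. $U^{\rm SigSAS}_{\lambda,l,p}$ is the unique (echo state) solution filter of $\mathbf x_t=\lambda\pi_l(\mathbf x_{t-1})\otimes\widetilde{\mathbf z}_t+\widehat{\mathbf z}^0_t$ with uniformly bounded states. *)

theory Defs
  imports "HOL-Analysis.Analysis"
begin

(* Tensors in T^k(R^{p+1}) are represented by their coefficient functions
   on multi-indices: lists of length k with entries in {0..p}; index i
   stands for the basis vector e_{i+1}.  Coefficients outside this index
   set are irrelevant and kept 0 by all constructions. *)

definition tidx :: "nat \<Rightarrow> nat \<Rightarrow> nat list set" where
  "tidx p k = {is. length is = k \<and> set is \<subseteq> {0..p}}"

type_synonym tensor = "nat list \<Rightarrow> real"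

definition tnorm :: "nat \<Rightarrow> nat \<Rightarrow> tensor \<Rightarrow> real" where
  "tnorm p k x = sqrt (\<Sum>is\<in>tidx p k. (x is)^2)"

(* hat z_t = tilde z_{t-l} \<otimes> ... \<otimes> tilde z_t, tilde z = sum_i z^i e_{i+1} *)
definition zhat :: "nat \<Rightarrow> nat \<Rightarrow> (int \<Rightarrow> real) \<Rightarrow> int \<Rightarrow> tensor" where
  "zhat l p z t = (\<lambda>is. if is \<in> tidx p (l+1)
       then (\<Prod>j<l+1. (z (t - int l + int j)) ^ (is ! j)) else 0)"

(* hat z^0 = sum_{i in I0} z^i e_1^{\<otimes> l} \<otimes> e_{i+1}  (0-based I0) *)
definition zhat0 :: "nat \<Rightarrow> nat \<Rightarrow> nat set \<Rightarrow> real \<Rightarrow> tensor" where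
  "zhat0 l p I0 w = (\<lambda>is. if is \<in> tidx p (l+1) \<and> (\<exists>i\<in>I0. is = replicate l 0 @ [i])
       then w ^ (last is) else 0)"

definition proj :: "tensor \<Rightarrow> tensor" where
  "proj x = (\<lambda>is. x (0 # is))"

(* x \<otimes> tilde w for x in T^l *)
definition tensor_vec :: "nat \<Rightarrow> nat \<Rightarrow> tensor \<Rightarrow> real \<Rightarrow> tensor" where
  "tensor_vec l p x w = (\<lambda>is. if is \<in> tidx p (l+1)
       then x (butlast is) * w ^ (last is) else 0)"

definition sigsas_solution ::
  "real \<Rightarrow> nat \<Rightarrow> nat \<Rightarrow> nat set \<Rightarrow> (int \<Rightarrow> real) \<Rightarrow> (int \<Rightarrow> tensor) \<Rightarrow> bool" where
  "sigsas_solution lam l p I0 z x \<longleftrightarrow>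
     (\<forall>t\<le>0. x t = (\<lambda>is. lam * tensor_vec l p (proj (x (t - 1))) (z t) is
                           + zhat0 l p I0 (z t) is)) \<and>
     (\<exists>C. \<forall>t\<le>0. tnorm p (l+1) (x t) \<le> C)"

definition U_sigsas ::
  "real \<Rightarrow> nat \<Rightarrow> nat \<Rightarrow> nat set \<Rightarrow> (int \<Rightarrow> real) \<Rightarrow> int \<Rightarrow> tensor" where
  "U_sigsas lam l p I0 z t = (THE v. \<exists>x. sigsas_solution lam l p I0 z x \<and> x t = v)"

definition KM :: "real \<Rightarrow> (int \<Rightarrow> real) set" where
  "KM M = {z. \<forall>t\<le>0. \<bar>z t\<bar> \<le> M}"

definition Mtilde :: "real \<Rightarrow> nat \<Rightarrow> real" where
  "Mtilde M p = (\<Sum>j\<le>p. M ^ j)"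

definition matapply :: "nat \<Rightarrow> nat \<Rightarrow> (nat list \<Rightarrow> nat list \<Rightarrow> real) \<Rightarrow> tensor \<Rightarrow> tensor" where
  "matapply p k a v = (\<lambda>is. if is \<in> tidx p k then (\<Sum>js\<in>tidx p k. a is js * v js) else 0)"

definition mat_invertible :: "nat \<Rightarrow> nat \<Rightarrow> (nat list \<Rightarrow> nat list \<Rightarrow> real) \<Rightarrow> bool" where
  "mat_invertible p k a \<longleftrightarrow> (\<exists>b.
     (\<forall>is\<in>tidx p k. \<forall>ks\<in>tidx p k. (\<Sum>js\<in>tidx p k. a is js * b js ks) = (if is = ks then 1 else 0)) \<and>
     (\<forall>is\<in>tidx p k. \<forall>ks\<in>tidx p k. (\<Sum>js\<in>tidx p k. b is js * a js ks) = (if is = ks then 1 else 0)))"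

end

theory Submission
  imports Defs
begin

text \<open>
  The matrix is diagonal. Unrolling the state equation k steps back, the coefficient of
  \<open>x t\<close> at a multi-index \<open>is\<close> receives \<open>\<lambda>\<^sup>k\<close> times the coefficient of
  \<open>zhat0\<close> (at time \<open>t - k\<close>) at the k-fold right shift of \<open>is\<close> (prepend k zeros, keep
  the first \<open>l + 1\<close> entries), and the powers of \<open>z\<close> collected on the way multiply up to
  the coefficient of \<open>zhat\<close> at \<open>is\<close>. Hence \<open>x t\<close> is \<open>zhat t\<close> multiplied coefficientwise by
  \<open>c is = \<Sum>k. \<lambda>\<^sup>k [shift\<^sup>k is \<in> supp zhat0]\<close>. For \<open>k > l\<close> the shifted index consists of
  zeros only and lies in the support because \<open>0 \<in> I0\<close>; this gives the tail
  \<open>\<lambda>\<^sup>l\<^sup>+\<^sup>1 / (1 - \<lambda>)\<close> in \<open>sigsas_weight\<close> and makes every \<open>c is\<close> positive.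
  The candidate is a bounded solution, and the only one: the difference of two bounded
  solutions shrinks by the factor \<open>\<lambda> * Mtilde M p < 1\<close> with every step back in time.
\<close>

definition shift_right :: "nat list \<Rightarrow> nat list" where
  "shift_right ys = take (length ys) (0 # ys)"

definition zhat0_indicator :: "nat \<Rightarrow> nat set \<Rightarrow> nat list \<Rightarrow> real" where
  "zhat0_indicator l I0 is = (if \<exists>i\<in>I0. is = replicate l 0 @ [i] then 1 else 0)"

definition sigsas_weight :: "real \<Rightarrow> nat \<Rightarrow> nat set \<Rightarrow> nat list \<Rightarrow> real" where
  "sigsas_weight lam l I0 is =
     (\<Sum>k\<le>l. lam ^ k * zhat0_indicator l I0 ((shift_right ^^ k) is)) + lam ^ (l+1) / (1 - lam)"

lemma length_shift_right [simp]: "length (shift_right ys) = length ys"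
  by (simp add: shift_right_def)

lemma length_funpow_shift_right [simp]: "length ((shift_right ^^ n) ys) = length ys"
  by (induction n) auto

lemma funpow_shift_right: "(shift_right ^^ n) ys = take (length ys) (replicate n 0 @ ys)"
proof (induction n)
  case (Suc n)
  have "(shift_right ^^ Suc n) ys = take (length ys) (0 # (shift_right ^^ n) ys)"
    by (simp add: shift_right_def)
  also have "\<dots> = take (length ys) (0 # take (length ys) (replicate n 0 @ ys))"
    by (simp only: Suc)
  also have "\<dots> = take (length ys) (replicate (Suc n) 0 @ ys)"
    by (cases "length ys") (simp_all add: min_def)
  finally show ?case .
qed simp

lemma shift_right_eq_Cons_butlast: "ys \<noteq> [] \<Longrightarrow> shift_right ys = 0 # butlast ys"
  by (cases ys) (simp_all add: shift_right_def butlast_conv_take)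

lemma sigsas_weight_rec:
  assumes "length is = l + 1" "0 \<in> I0" "lam \<noteq> 1"
  shows "sigsas_weight lam l I0 is = lam * sigsas_weight lam l I0 (shift_right is) + zhat0_indicator l I0 is"
proof -
  define S where "S = (\<Sum>k\<le>l. lam ^ k * zhat0_indicator l I0 ((shift_right ^^ k) is))"
  define S' where "S' = (\<Sum>k\<le>l. lam ^ k * zhat0_indicator l I0 ((shift_right ^^ k) (shift_right is)))"
  define R where "R = lam ^ (l+1) / (1 - lam)"
  have full_shift: "zhat0_indicator l I0 ((shift_right ^^ Suc l) is) = 1"
    using assms(1,2) by (simp add: funpow_shift_right zhat0_indicator_def
        replicate_append_same[symmetric] del: funpow.simps)
  have "(\<Sum>k\<le>Suc l. lam ^ k * zhat0_indicator l I0 ((shift_right ^^ k) is))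
      = zhat0_indicator l I0 is + lam * S'"
    unfolding S'_def sum.atMost_Suc_shift
    by (simp add: sum_distrib_left funpow_Suc_right mult.assoc del: funpow.simps)
  moreover have "(\<Sum>k\<le>Suc l. lam ^ k * zhat0_indicator l I0 ((shift_right ^^ k) is)) = S + lam ^ Suc l"
    unfolding S_def using full_shift by (simp del: funpow.simps)
  moreover have "R = lam ^ (l+1) + lam * R"
    using assms(3) by (simp add: R_def field_simps)
  ultimately have "S + R = lam * (S' + R) + zhat0_indicator l I0 is"
    by (simp add: algebra_simps)
  then show ?thesis
    by (simp add: sigsas_weight_def S_def S'_def R_def)
qed

lemma sigsas_weight_pos: "0 < lam \<Longrightarrow> lam < 1 \<Longrightarrow> 0 < sigsas_weight lam l I0 is"
  unfolding sigsas_weight_def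
  by (intro add_nonneg_pos sum_nonneg) (auto simp: zhat0_indicator_def)

lemma sigsas_weight_le:
  "0 < lam \<Longrightarrow> sigsas_weight lam l I0 is \<le> (\<Sum>k\<le>l. lam ^ k) + lam ^ (l+1) / (1 - lam)"
  unfolding sigsas_weight_def
  by (intro add_right_mono sum_mono) (simp add: zhat0_indicator_def)

lemma finite_tidx: "finite (tidx p k)"
proof -
  have "tidx p k = {xs. set xs \<subseteq> {0..p} \<and> length xs = k}"
    unfolding tidx_def by auto
  then show ?thesis
    using finite_lists_length_eq[of "{0..p}" k] by simp
qed

lemma Cons_0_butlast_in_tidx: "is \<in> tidx p (l+1) \<Longrightarrow> 0 # butlast is \<in> tidx p (l+1)"
  unfolding tidx_def by (auto dest: in_set_butlastD)

lemma last_le_of_in_tidx: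
  assumes "is \<in> tidx p (l+1)"
  shows "last is \<le> p"
proof -
  have "is \<noteq> []" "set is \<subseteq> {0..p}"
    using assms by (auto simp: tidx_def)
  then show ?thesis
    using last_in_set by fastforce
qed

lemma abs_coeff_le_tnorm:
  assumes "is \<in> tidx p k"
  shows "\<bar>x is\<bar> \<le> tnorm p k x"
proof -
  have "(x is)\<^sup>2 \<le> (\<Sum>js\<in>tidx p k. (x js)\<^sup>2)"
    using assms finite_tidx by (intro member_le_sum) auto
  then show ?thesis
    unfolding tnorm_def by (metis real_sqrt_abs real_sqrt_le_mono)
qed

lemma tnorm_le_of_abs_coeff_le:
  assumes "\<And>is. is \<in> tidx p k \<Longrightarrow> \<bar>x is\<bar> \<le> B"
  shows "tnorm p k x \<le> sqrt (\<Sum>is\<in>tidx p k. B\<^sup>2)"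
  unfolding tnorm_def
proof (intro real_sqrt_le_mono sum_mono)
  fix "is" assume "is \<in> tidx p k"
  then have "\<bar>x is\<bar>\<^sup>2 \<le> B\<^sup>2"
    using assms by (intro power_mono) auto
  then show "(x is)\<^sup>2 \<le> B\<^sup>2" by simp
qed

lemma matapply_diag:
  "matapply p k (\<lambda>is js. if is = js then f is else 0) v = (\<lambda>is. if is \<in> tidx p k then f is * v is else 0)"
proof
  fix "is"
  have "(\<Sum>js\<in>tidx p k. (if is = js then f is else 0) * v js)
      = (\<Sum>js\<in>tidx p k. if is = js then f is * v js else 0)"
    by (intro sum.cong) auto
  then show "matapply p k (\<lambda>is js. if is = js then f is else 0) v is
      = (if is \<in> tidx p k then f is * v is else 0)"
    by (simp add: matapply_def finite_tidx)
qed

lemma sum_diag_mult_diag: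
  fixes f g :: "nat list \<Rightarrow> real"
  assumes "is \<in> tidx p k"
  shows "(\<Sum>js\<in>tidx p k. (if is = js then f is else 0) * (if js = ks then g js else 0))
       = (if is = ks then f is * g is else 0)"
proof -
  have "(\<Sum>js\<in>tidx p k. (if is = js then f is else 0) * (if js = ks then g js else 0))
      = (\<Sum>js\<in>tidx p k. if js = is then (if is = ks then f is * g is else 0) else 0)"
    by (intro sum.cong) auto
  then show ?thesis
    using assms finite_tidx by simp
qed

lemma mat_invertible_diag:
  fixes f :: "nat list \<Rightarrow> real"
  assumes "\<And>is. f is \<noteq> 0"
  shows "mat_invertible p k (\<lambda>is js. if is = js then f is else 0)"
  unfolding mat_invertible_def
proof (intro exI[of _ "\<lambda>is js. if is = js then 1 / f is else 0"] conjI ballI)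
  fix "is" ks assume "is \<in> tidx p k"
  show "(\<Sum>js\<in>tidx p k. (if is = js then f is else 0) * (if js = ks then 1 / f js else 0))
      = (if is = ks then 1 else 0)"
    using sum_diag_mult_diag[OF \<open>is \<in> tidx p k\<close>, of f ks "\<lambda>js. 1 / f js"] assms by simp
  show "(\<Sum>js\<in>tidx p k. (if is = js then 1 / f is else 0) * (if js = ks then f js else 0))
      = (if is = ks then 1 else 0)"
    using sum_diag_mult_diag[OF \<open>is \<in> tidx p k\<close>, of "\<lambda>js. 1 / f js" ks f] assms by simp
qed

lemma one_le_Mtilde: "0 < M \<Longrightarrow> 1 \<le> Mtilde M p"
  unfolding Mtilde_def
  by (metis atMost_iff finite_atMost le0 less_imp_le member_le_sum power_0 zero_le_power)

lemma abs_power_le_Mtilde: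
  assumes "0 < M" "\<bar>w\<bar> \<le> M" "i \<le> p"
  shows "\<bar>w\<bar> ^ i \<le> Mtilde M p"
proof -
  have "\<bar>w\<bar> ^ i \<le> M ^ i"
    using assms by (intro power_mono) auto
  also have "\<dots> \<le> (\<Sum>j\<le>p. M ^ j)"
    using assms by (intro member_le_sum) auto
  finally show ?thesis by (simp add: Mtilde_def)
qed

lemma abs_zhat_le:
  assumes "z \<in> KM M" "0 < M" "t \<le> 0"
  shows "\<bar>zhat l p z t is\<bar> \<le> Mtilde M p ^ (l+1)"
proof (cases "is \<in> tidx p (l+1)")
  case True
  have "\<bar>zhat l p z t is\<bar> = (\<Prod>j<l+1. \<bar>z (t - int l + int j)\<bar> ^ (is ! j))"
    using True by (simp add: zhat_def abs_prod power_abs abs_mult)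
  also have "\<dots> \<le> (\<Prod>j<l+1. Mtilde M p)"
  proof (intro prod_mono conjI)
    fix j assume "j \<in> {..<l+1}"
    then have "is ! j \<in> set is"
      using True by (simp add: tidx_def)
    then have "is ! j \<le> p"
      using True by (auto simp: tidx_def)
    moreover have "\<bar>z (t - int l + int j)\<bar> \<le> M"
      using assms(1,3) \<open>j \<in> {..<l+1}\<close> by (simp add: KM_def)
    ultimately show "\<bar>z (t - int l + int j)\<bar> ^ (is ! j) \<le> Mtilde M p"
      using abs_power_le_Mtilde assms(2) by blast
  qed simp
  finally show ?thesis by simp
qed (use one_le_Mtilde[OF assms(2), of p] in \<open>simp add: zhat_def\<close>)

lemma zhat_eq_prod_last:
  assumes "is \<in> tidx p (l+1)"
  shows "zhat l p z t is = (\<Prod>j<l. z (t - int l + int j) ^ (is ! j)) * z t ^ last is"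
proof -
  have "length is = Suc l" "is \<noteq> []"
    using assms by (auto simp: tidx_def)
  then show ?thesis
    using assms by (simp add: zhat_def last_conv_nth)
qed

lemma zhat_shift:
  assumes "is \<in> tidx p (l+1)"
  shows "zhat l p z (t - 1) (0 # butlast is) * z t ^ last is = zhat l p z t is"
proof -
  have "length is = Suc l"
    using assms by (simp add: tidx_def)
  then have "(\<Prod>j<l. z (t - int l + int j) ^ (butlast is ! j)) = (\<Prod>j<l. z (t - int l + int j) ^ (is ! j))"
    by (intro prod.cong) (auto simp: nth_butlast)
  moreover have "zhat l p z (t - 1) (0 # butlast is) = (\<Prod>j<l. z (t - int l + int j) ^ (butlast is ! j))"
    using Cons_0_butlast_in_tidx[OF assms]
    by (simp add: zhat_def prod.lessThan_Suc_shift del: prod.lessThan_Suc) (simp add: algebra_simps)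
  ultimately show ?thesis
    using zhat_eq_prod_last[OF assms] by simp
qed

lemma zhat0_eq_indicator_mult_zhat:
  assumes "is \<in> tidx p (l+1)"
  shows "zhat0 l p I0 (z t) is = zhat0_indicator l I0 is * zhat l p z t is"
proof (cases "\<exists>i\<in>I0. is = replicate l 0 @ [i]")
  case True
  then obtain i where "is = replicate l 0 @ [i]" by blast
  then have "zhat l p z t is = z t ^ last is"
    using zhat_eq_prod_last[OF assms] by (simp add: nth_append)
  then show ?thesis
    using True assms by (simp add: zhat0_def zhat0_indicator_def)
qed (simp add: zhat0_def zhat0_indicator_def)

lemma sigsas_solution_coeff:
  assumes "sigsas_solution lam l p I0 z x" "t \<le> 0"
  shows "x t is = (if is \<in> tidx p (l+1) then lam * x (t - 1) (0 # butlast is) * z t ^ last is else 0)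
                 + zhat0 l p I0 (z t) is"
  using assms unfolding sigsas_solution_def by (simp add: tensor_vec_def proj_def)

lemma sigsas_solution_outside_tidx:
  "sigsas_solution lam l p I0 z x \<Longrightarrow> t \<le> 0 \<Longrightarrow> is \<notin> tidx p (l+1) \<Longrightarrow> x t is = 0"
  by (simp add: sigsas_solution_coeff zhat0_def)

lemma sigsas_solution_diff_le:
  assumes z: "z \<in> KM M" "0 < M" and "0 < lam"
    and x: "sigsas_solution lam l p I0 z x" "\<forall>t\<le>0. tnorm p (l+1) (x t) \<le> Cx"
    and y: "sigsas_solution lam l p I0 z y" "\<forall>t\<le>0. tnorm p (l+1) (y t) \<le> Cy"
  shows "\<forall>t\<le>0. \<forall>is\<in>tidx p (l+1). \<bar>x t is - y t is\<bar> \<le> (lam * Mtilde M p) ^ n * (Cx + Cy)"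
proof (induction n)
  case 0
  show ?case
  proof (intro allI impI ballI)
    fix t :: int and "is" assume "t \<le> 0" "is \<in> tidx p (l+1)"
    then have "\<bar>x t is\<bar> \<le> Cx" "\<bar>y t is\<bar> \<le> Cy"
      using x(2) y(2) abs_coeff_le_tnorm order_trans by blast+
    then show "\<bar>x t is - y t is\<bar> \<le> (lam * Mtilde M p) ^ 0 * (Cx + Cy)"
      by simp
  qed
next
  case (Suc n)
  show ?case
  proof (intro allI impI ballI)
    fix t :: int and "is" assume t: "t \<le> 0" and "is": "is \<in> tidx p (l+1)"
    let ?js = "0 # butlast is"
    have "\<bar>x t is - y t is\<bar> = lam * \<bar>x (t - 1) ?js - y (t - 1) ?js\<bar> * \<bar>z t\<bar> ^ last is"
      using sigsas_solution_coeff[OF x(1) t, of "is"] sigsas_solution_coeff[OF y(1) t, of "is"] "is" \<open>0 < lam\<close>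
      by (simp add: abs_mult power_abs flip: right_diff_distrib left_diff_distrib)
    also have "\<dots> \<le> lam * \<bar>x (t - 1) ?js - y (t - 1) ?js\<bar> * Mtilde M p"
      using z t last_le_of_in_tidx[OF "is"] \<open>0 < lam\<close>
      by (intro mult_left_mono abs_power_le_Mtilde) (auto simp: KM_def)
    also have "\<dots> \<le> lam * ((lam * Mtilde M p) ^ n * (Cx + Cy)) * Mtilde M p"
      using Suc t Cons_0_butlast_in_tidx[OF "is"] \<open>0 < lam\<close> one_le_Mtilde[OF z(2), of p]
      by (intro mult_right_mono mult_left_mono) auto
    also have "\<dots> = (lam * Mtilde M p) ^ Suc n * (Cx + Cy)"
      by (simp add: algebra_simps)
    finally show "\<bar>x t is - y t is\<bar> \<le> (lam * Mtilde M p) ^ Suc n * (Cx + Cy)" .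
  qed
qed

lemma nonpos_if_le_geometric:
  fixes a q C :: real
  assumes "\<And>n. a \<le> q ^ n * C" "0 \<le> q" "q < 1"
  shows "a \<le> 0"
proof -
  have "(\<lambda>n. q ^ n * C) \<longlonglongrightarrow> 0 * C"
    using assms by (intro tendsto_mult LIMSEQ_power_zero tendsto_const) auto
  then show ?thesis
    using assms(1) by (intro LIMSEQ_le_const) auto
qed

lemma sigsas_solution_unique:
  assumes "z \<in> KM M" "0 < M" "0 < lam" "lam * Mtilde M p < 1"
    and x: "sigsas_solution lam l p I0 z x" and y: "sigsas_solution lam l p I0 z y"
    and t: "t \<le> 0"
  shows "x t = y t"
proof
  fix "is"
  obtain Cx Cy where "\<forall>t\<le>0. tnorm p (l+1) (x t) \<le> Cx" "\<forall>t\<le>0. tnorm p (l+1) (y t) \<le> Cy"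
    using x y unfolding sigsas_solution_def by blast
  note diff_le = sigsas_solution_diff_le[OF assms(1-3) x this(1) y this(2)]
  show "x t is = y t is"
  proof (cases "is \<in> tidx p (l+1)")
    case True
    have "\<bar>x t is - y t is\<bar> \<le> 0"
      using diff_le t True assms(3,4) one_le_Mtilde[OF assms(2), of p]
      by (intro nonpos_if_le_geometric[of _ "lam * Mtilde M p" "Cx + Cy"]) auto
    then show ?thesis by simp
  qed (simp add: sigsas_solution_outside_tidx[OF x t] sigsas_solution_outside_tidx[OF y t])
qed

lemma sigsas_solution_weighted_zhat:
  assumes z: "z \<in> KM M" "0 < M" and lam: "0 < lam" "lam < 1" and "0 \<in> I0"
  shows "sigsas_solution lam l p I0 z (\<lambda>s is. sigsas_weight lam l I0 is * zhat l p z s is)"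
    (is "sigsas_solution _ _ _ _ _ ?x")
  unfolding sigsas_solution_def
proof (intro conjI allI impI ext)
  fix s :: int and "is"
  show "?x s is = lam * tensor_vec l p (proj (?x (s - 1))) (z s) is + zhat0 l p I0 (z s) is"
  proof (cases "is \<in> tidx p (l+1)")
    case True
    then have "length is = l + 1" "is \<noteq> []"
      by (auto simp: tidx_def)
    then have "sigsas_weight lam l I0 is
        = lam * sigsas_weight lam l I0 (0 # butlast is) + zhat0_indicator l I0 is"
      using sigsas_weight_rec \<open>0 \<in> I0\<close> lam(2) shift_right_eq_Cons_butlast by force
    then show ?thesis
      using True zhat_shift[OF True, of z s] zhat0_eq_indicator_mult_zhat[OF True, of I0 z s]
      by (simp add: tensor_vec_def proj_def algebra_simps)
  qed (simp add: zhat_def tensor_vec_def zhat0_def)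
next
  let ?B = "((\<Sum>k\<le>l. lam ^ k) + lam ^ (l+1) / (1 - lam)) * Mtilde M p ^ (l+1)"
  have "\<bar>?x s is\<bar> \<le> ?B" if "s \<le> 0" for s "is"
  proof -
    have "0 < sigsas_weight lam l I0 is" "sigsas_weight lam l I0 is \<le> (\<Sum>k\<le>l. lam ^ k) + lam ^ (l+1) / (1 - lam)"
      using sigsas_weight_pos[OF lam] sigsas_weight_le[OF lam(1)] by auto
    then show ?thesis
      unfolding abs_mult using abs_zhat_le[OF z that] by (intro mult_mono) auto
  qed
  then have "tnorm p (l+1) (?x s) \<le> sqrt (\<Sum>is\<in>tidx p (l+1). ?B\<^sup>2)" if "s \<le> 0" for s
    using that by (intro tnorm_le_of_abs_coeff_le)
  then show "\<exists>C. \<forall>s\<le>0. tnorm p (l+1) (?x s) \<le> C"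
    by blast
qed

lemma U_sigsas_eqI:
  assumes "sigsas_solution lam l p I0 z x"
    and "\<And>y. sigsas_solution lam l p I0 z y \<Longrightarrow> y t = x t"
  shows "U_sigsas lam l p I0 z t = x t"
  unfolding U_sigsas_def using assms by (intro the_equality) blast+

lemma U_sigsas_eq_weighted_zhat:
  assumes "z \<in> KM M" "0 < M" "0 < lam" "lam < 1" "lam * Mtilde M p < 1" "0 \<in> I0" "t \<le> 0"
  shows "U_sigsas lam l p I0 z t = (\<lambda>is. sigsas_weight lam l I0 is * zhat l p z t is)"
proof -
  let ?x = "\<lambda>s is. sigsas_weight lam l I0 is * zhat l p z s is"
  have sol: "sigsas_solution lam l p I0 z ?x"
    using sigsas_solution_weighted_zhat[OF assms(1-4,6)] .
  have "U_sigsas lam l p I0 z t = ?x t"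
    by (rule U_sigsas_eqI[OF sol]) (rule sigsas_solution_unique[OF assms(1-3,5) _ sol assms(7)])
  then show ?thesis by simp
qed

theorem mainTheorem3:
  fixes M lam :: real and l p :: nat and I0 :: "nat set"
  assumes "M > 0"
    and "I0 \<subseteq> {0..p}" and "0 \<in> I0" and "card I0 > 1"
    and "0 < lam" and "lam < min 1 (1 / Mtilde M p)"
  shows "\<exists>a :: nat list \<Rightarrow> nat list \<Rightarrow> real.
           mat_invertible p (l+1) a \<and>
           (\<forall>is\<in>tidx p (l+1). \<forall>js\<in>tidx p (l+1). a is js \<ge> 0) \<and>
           (\<forall>z\<in>KM M. \<forall>t\<le>0. U_sigsas lam l p I0 z t = matapply p (l+1) a (zhat l p z t))"
proof -
  have "lam < 1" "lam < 1 / Mtilde M p"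
    using assms(6) by simp_all
  then have "lam * Mtilde M p < 1"
    using one_le_Mtilde[OF assms(1), of p] by (simp add: less_divide_eq)
  have weight_pos: "0 < sigsas_weight lam l I0 is" for "is"
    using sigsas_weight_pos \<open>0 < lam\<close> \<open>lam < 1\<close> by blast
  let ?a = "\<lambda>is js. if is = js then sigsas_weight lam l I0 is else 0"
  show ?thesis
  proof (intro exI[of _ ?a] conjI ballI allI impI)
    show "mat_invertible p (l+1) ?a"
      using weight_pos by (intro mat_invertible_diag) (metis order_less_irrefl)
    show "0 \<le> ?a is js" for "is" js
      using weight_pos by (simp add: less_imp_le)
    show "U_sigsas lam l p I0 z t = matapply p (l+1) ?a (zhat l p z t)" if "z \<in> KM M" "t \<le> 0" for z t
      using U_sigsas_eq_weighted_zhat[OF that(1) assms(1,5) \<open>lam < 1\<close> \<open>lam * Mtilde M p < 1\<close> assms(3) that(2)]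
      by (auto simp: matapply_diag zhat_def)
  qed
qed

end
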